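(* Consider the queueing system in the context under MaxWeight with a diagonal matrix $\Delta$ with positive diagonal entries, in overload ($\rho\notin\mathcal{P}$), and let $\eta=\lim_{t\to\infty}X(t)/t$. Then $$\langle\eta,\Delta\eta\rangle=\langle\rho,\Delta\eta\rangle-\max_{S\in\mathcal{S}}\langle S,\Delta\eta\rangle.$$
   Context: Model: $Q$ queues, finite set $\mathcal{S}=\{S_1,\dots,S_N\}\subset\mathbb{R}^Q_{\ge0}$, discrete time. Arrivals $A(t)$ with $0\le A_q(t)\le\bar A_q<\infty$ and $\rho_q=\lim_{t\to\infty}\frac1t\sum_{s=0}^{t-1}A_q(s)\in(0,\infty)$. Departures $D_q(t)=\min\{S_q(t),X_q(t)\}$, $X(t+1)=X(t)+A(t)-D(t)$, $X(0)=0$, with $S(t)\in\arg\max_{S\in\mathcal{S}}\langle S,\Delta X(t)\rangle$. Stability region $\mathcal{P}=\{r\in\mathbb{R}^Q_{\ge0}: r\le\sum_n\alpha_nS_n\text{ for some }\alpha_n\ge0,\sum_n\alpha_n=1\}$. (Under these assumptions $\lim_t X(t)/t$ exists.) *)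

theory Defs
  imports Complex_Main
begin

definition ip :: "('q::finite \<Rightarrow> real) \<Rightarrow> ('q \<Rightarrow> real) \<Rightarrow> real" where
  "ip x y = (\<Sum>q\<in>UNIV. x q * y q)"

text \<open>Diagonal matrix Delta = diag(d) applied to a vector.\<close>
definition diag_apply :: "('q \<Rightarrow> real) \<Rightarrow> ('q \<Rightarrow> real) \<Rightarrow> ('q \<Rightarrow> real)" where
  "diag_apply d x = (\<lambda>q. d q * x q)"

definition stab_region :: "('q \<Rightarrow> real) set \<Rightarrow> ('q \<Rightarrow> real) set" where
  "stab_region Sch = {r. (\<forall>q. 0 \<le> r q) \<and>
      (\<exists>\<alpha>. (\<forall>S\<in>Sch. 0 \<le> \<alpha> S) \<and> (\<Sum>S\<in>Sch. \<alpha> S) = 1 \<and>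
            (\<forall>q. r q \<le> (\<Sum>S\<in>Sch. \<alpha> S * S q)))}"

end

theory Submission
  imports Defs
begin

(* Cumulative departures are cumulative arrivals minus the backlog, so the Cesaro means of
   <D(t), Delta eta> converge to <rho - eta, Delta eta>. On the other hand, a queue with
   eta_q > 0 has a linearly growing backlog, so eventually it is served at its full scheduled
   rate, D_q(t) = S_q(t); and since X(t)/t -> eta, the MaxWeight schedule S(t) becomes
   asymptotically optimal for the weight Delta eta. Hence <D(t), Delta eta> itself converges to
   max_S <S, Delta eta>. *)

lemma cesaro_mean_tendsto_zero:
  fixes g :: "nat \<Rightarrow> 'a::real_normed_vector"
  assumes "g \<longlonglongrightarrow> 0"
  shows "(\<lambda>n. (\<Sum>k<n. g k) /\<^sub>R real n) \<longlonglongrightarrow> 0"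
proof (rule tendstoI)
  fix r :: real assume "0 < r"
  then obtain N where N: "\<And>k. N \<le> k \<Longrightarrow> norm (g k) < r / 2"
    using LIMSEQ_D[OF assms, of "r / 2"] by auto
  define C where "C = (\<Sum>k<N. norm (g k))"
  have "\<forall>\<^sub>F n in sequentially. C / real n < r / 2"
    using \<open>0 < r\<close> by (intro order_tendstoD(2)[OF lim_const_over_n]) simp
  moreover have "\<forall>\<^sub>F n in sequentially. N \<le> n \<and> 0 < n"
    by (rule eventually_ge_at_top[of "Suc N", THEN eventually_mono]) auto
  ultimately show "\<forall>\<^sub>F n in sequentially. dist ((\<Sum>k<n. g k) /\<^sub>R real n) 0 < r"
  proof eventually_elim
    case (elim n)
    then have split: "{..<n} = {..<N} \<union> {N..<n}" by auto
    have "norm (\<Sum>k<n. g k) \<le> (\<Sum>k<n. norm (g k))"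
      by (rule norm_sum)
    also have "\<dots> = C + (\<Sum>k\<in>{N..<n}. norm (g k))"
      unfolding C_def split by (subst sum.union_disjoint) auto
    also have "\<dots> \<le> C + (\<Sum>k\<in>{N..<n}. r / 2)"
      using N by (intro add_left_mono sum_mono less_imp_le) auto
    also have "\<dots> \<le> C + real n * (r / 2)"
      using \<open>0 < r\<close> by simp
    finally have "norm (\<Sum>k<n. g k) / real n \<le> C / real n + r / 2"
      using elim by (simp add: divide_simps mult.commute)
    with elim show ?case by (simp add: field_simps)
  qed
qed

lemma cesaro_mean_tendsto:
  fixes f :: "nat \<Rightarrow> 'a::real_normed_vector"
  assumes "f \<longlonglongrightarrow> L"
  shows "(\<lambda>n. (\<Sum>k<n. f k) /\<^sub>R real n) \<longlonglongrightarrow> L"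
proof -
  have "(\<lambda>n. (\<Sum>k<n. f k - L) /\<^sub>R real n + L) \<longlonglongrightarrow> 0 + L"
    using assms by (intro tendsto_add cesaro_mean_tendsto_zero) (simp_all add: LIM_zero)
  moreover have "\<forall>\<^sub>F n in sequentially. (\<Sum>k<n. f k - L) /\<^sub>R real n + L = (\<Sum>k<n. f k) /\<^sub>R real n"
    by (rule eventually_ge_at_top[of 1, THEN eventually_mono])
       (simp add: sum_subtractf scaleR_diff_right sum_constant_scaleR)
  ultimately show ?thesis
    by (simp add: tendsto_cong)
qed

lemma tendsto_Max_of_argmax:
  fixes g :: "nat \<Rightarrow> 'a \<Rightarrow> real" and G :: "'a \<Rightarrow> real"
  assumes "finite K"
    and lim: "\<And>S. S \<in> K \<Longrightarrow> (\<lambda>t. g t S) \<longlonglongrightarrow> G S"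
    and sel_in: "\<And>t. sel t \<in> K"
    and sel_max: "\<And>t S. S \<in> K \<Longrightarrow> g t S \<le> g t (sel t)"
  shows "(\<lambda>t. G (sel t)) \<longlonglongrightarrow> Max (G ` K)"
proof (rule tendstoI)
  fix r :: real assume "0 < r"
  have "K \<noteq> {}" using sel_in by blast
  then have "Max (G ` K) \<in> G ` K"
    using \<open>finite K\<close> by simp
  then obtain S0 where "S0 \<in> K" and S0_max: "G S0 = Max (G ` K)"
    by auto
  have G_le: "G S \<le> G S0" if "S \<in> K" for S
    unfolding S0_max using \<open>finite K\<close> that by simp
  have "\<forall>\<^sub>F t in sequentially. \<forall>S\<in>K. dist (g t S) (G S) < r / 2"
    using \<open>finite K\<close> \<open>0 < r\<close> by (intro eventually_ball_finite ballI tendstoD[OF lim]) auto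
  then show "\<forall>\<^sub>F t in sequentially. dist (G (sel t)) (Max (G ` K)) < r"
  proof eventually_elim
    case (elim t)
    from elim have "dist (g t S0) (G S0) < r / 2" and "dist (g t (sel t)) (G (sel t)) < r / 2"
      using \<open>S0 \<in> K\<close> sel_in by auto
    moreover have "g t S0 \<le> g t (sel t)" and "G (sel t) \<le> G S0"
      using \<open>S0 \<in> K\<close> sel_in by (auto intro: sel_max G_le)
    ultimately show ?case
      unfolding S0_max[symmetric] dist_real_def by linarith
  qed
qed

lemma eventually_ge_of_linear_growth:
  fixes x :: "nat \<Rightarrow> real"
  assumes "(\<lambda>t. x t / real t) \<longlonglongrightarrow> c" and "0 < c"
  shows "\<forall>\<^sub>F t in sequentially. b \<le> x t"
proof -
  have "filterlim (\<lambda>t. x t / real t * real t) at_top sequentially"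
    using assms filterlim_real_sequentially by (rule filterlim_tendsto_pos_mult_at_top)
  moreover have "\<forall>\<^sub>F t in sequentially. x t / real t * real t = x t"
    by (rule eventually_ge_at_top[of 1, THEN eventually_mono]) simp
  ultimately have "filterlim x at_top sequentially"
    by (simp add: filterlim_cong)
  then show ?thesis
    by (simp add: filterlim_at_top)
qed

lemma ip_diff_left: "ip (\<lambda>q. x q - y q) z = ip x z - ip y z"
  unfolding ip_def by (simp add: left_diff_distrib sum_subtractf)

lemma ip_sum_left: "ip (\<lambda>q. \<Sum>s\<in>I. f s q) z = (\<Sum>s\<in>I. ip (f s) z)"
  unfolding ip_def by (simp add: sum_distrib_right sum.swap[of _ I])

lemma ip_divide_left: "ip (\<lambda>q. x q / c) z = ip x z / c"
  unfolding ip_def by (simp add: sum_divide_distrib)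

lemma ip_diag_apply_divide: "ip x (diag_apply d (\<lambda>q. y q / c)) = ip x (diag_apply d y) / c"
  unfolding ip_def diag_apply_def by (simp add: sum_divide_distrib)

lemma tendsto_ip:
  assumes "\<And>q. ((\<lambda>t. x t q) \<longlongrightarrow> a q) F" and "\<And>q. ((\<lambda>t. y t q) \<longlongrightarrow> b q) F"
  shows "((\<lambda>t. ip (x t) (y t)) \<longlongrightarrow> ip a b) F"
  unfolding ip_def using assms by (intro tendsto_intros)

lemma tendsto_diag_apply:
  assumes "\<And>q. ((\<lambda>t. x t q) \<longlongrightarrow> a q) F"
  shows "((\<lambda>t. diag_apply d (x t) q) \<longlongrightarrow> diag_apply d a q) F"
  unfolding diag_apply_def using assms by (intro tendsto_intros)

lemma backlog_nonneg:
  fixes x a s :: "nat \<Rightarrow> real"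
  assumes "0 \<le> x 0" and "\<And>t. 0 \<le> a t"
    and "\<And>t. x (Suc t) = x t + a t - min (s t) (x t)"
  shows "0 \<le> x t"
proof (cases t)
  case (Suc k)
  have "0 \<le> x k - min (s k) (x k) + a k"
    using assms(2)[of k] by simp
  then show ?thesis
    unfolding Suc assms(3) by linarith
qed (use assms in simp)

lemma backlog_eq_arrivals_minus_departures:
  fixes x a s :: "nat \<Rightarrow> real"
  assumes "x 0 = 0" and "\<And>t. x (Suc t) = x t + a t - min (s t) (x t)"
  shows "x t = (\<Sum>k<t. a k) - (\<Sum>k<t. min (s k) (x k))"
  by (induction t) (simp_all add: assms)

lemma eventually_departures_eq_service:
  fixes x s :: "nat \<Rightarrow> real"
  assumes "(\<lambda>t. x t / real t) \<longlonglongrightarrow> c" and "0 < c" and "\<And>t. s t \<le> B"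
  shows "\<forall>\<^sub>F t in sequentially. min (s t) (x t) = s t"
  using eventually_ge_of_linear_growth[OF assms(1,2), of B]
  by eventually_elim (meson assms(3) min_absorb1 order_trans)

lemma maxweight_asymptotically_optimal:
  fixes Sch :: "('q::finite \<Rightarrow> real) set"
  assumes "finite Sch" and "\<And>t. Sel t \<in> Sch"
    and "\<And>t S. S \<in> Sch \<Longrightarrow> ip S (diag_apply d (X t)) \<le> ip (Sel t) (diag_apply d (X t))"
    and "\<And>q. (\<lambda>t. X t q / real t) \<longlonglongrightarrow> \<eta> q"
  shows "(\<lambda>t. ip (Sel t) (diag_apply d \<eta>)) \<longlonglongrightarrow> Max ((\<lambda>S. ip S (diag_apply d \<eta>)) ` Sch)"
proof (rule tendsto_Max_of_argmax[OF assms(1) _ assms(2)])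
  show "(\<lambda>t. ip S (diag_apply d (\<lambda>q. X t q / real t))) \<longlonglongrightarrow> ip S (diag_apply d \<eta>)" for S
    using assms(4) by (intro tendsto_ip tendsto_diag_apply tendsto_const)
  show "ip S (diag_apply d (\<lambda>q. X t q / real t)) \<le> ip (Sel t) (diag_apply d (\<lambda>q. X t q / real t))"
    if "S \<in> Sch" for t S
    using assms(3)[OF that] unfolding ip_diag_apply_divide by (simp add: divide_right_mono)
qed

lemma eventually_departures_eq_schedule:
  fixes Sch :: "('q::finite \<Rightarrow> real) set"
  assumes "finite Sch" and "\<And>t. Sel t \<in> Sch" and "\<And>t q. 0 \<le> X t q"
    and "\<And>q. (\<lambda>t. X t q / real t) \<longlonglongrightarrow> \<eta> q"
  shows "\<forall>\<^sub>F t in sequentially.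
           ip (\<lambda>q. min (Sel t q) (X t q)) (diag_apply d \<eta>) = ip (Sel t) (diag_apply d \<eta>)"
proof -
  have "\<forall>\<^sub>F t in sequentially. \<eta> q = 0 \<or> min (Sel t q) (X t q) = Sel t q" for q
  proof (cases "\<eta> q = 0")
    case False
    have "0 \<le> \<eta> q"
      using assms(3,4) by (intro LIMSEQ_le_const[of "\<lambda>t. X t q / real t"]) auto
    with False have "0 < \<eta> q" by simp
    moreover have "Sel t q \<le> Max ((\<lambda>S. S q) ` Sch)" for t
      using assms(1,2) by simp
    ultimately have "\<forall>\<^sub>F t in sequentially. min (Sel t q) (X t q) = Sel t q"
      by (rule eventually_departures_eq_service[OF assms(4)])
    then show ?thesis
      by (rule eventually_mono) simp
  qed simp
  then have "\<forall>\<^sub>F t in sequentially. \<forall>q. \<eta> q = 0 \<or> min (Sel t q) (X t q) = Sel t q"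
    by (rule eventually_all_finite)
  then show ?thesis
    unfolding ip_def diag_apply_def by eventually_elim (intro sum.cong; auto)
qed

lemma average_departures_tendsto:
  fixes A X Sel :: "nat \<Rightarrow> 'q::finite \<Rightarrow> real"
  assumes "\<And>q. X 0 q = 0" and "\<And>t q. X (Suc t) q = X t q + A t q - min (Sel t q) (X t q)"
    and "\<And>q. (\<lambda>t. (\<Sum>s<t. A s q) / real t) \<longlonglongrightarrow> \<rho> q"
    and "\<And>q. (\<lambda>t. X t q / real t) \<longlonglongrightarrow> \<eta> q"
  shows "(\<lambda>t. (\<Sum>s<t. ip (\<lambda>q. min (Sel s q) (X s q)) w) / real t) \<longlonglongrightarrow> ip \<rho> w - ip \<eta> w"
proof -
  have "X t q = (\<Sum>s<t. A s q) - (\<Sum>s<t. min (Sel s q) (X s q))" for t q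
    using assms(1,2) by (rule backlog_eq_arrivals_minus_departures)
  then have "(\<Sum>s<t. min (Sel s q) (X s q)) = (\<Sum>s<t. A s q) - X t q" for t q
    by (simp add: algebra_simps)
  then have "(\<Sum>s<t. ip (\<lambda>q. min (Sel s q) (X s q)) w) / real t
      = ip (\<lambda>q. (\<Sum>s<t. A s q) / real t - X t q / real t) w" for t
    unfolding ip_sum_left[symmetric] by (simp add: ip_divide_left[symmetric] diff_divide_distrib)
  moreover have "(\<lambda>t. ip (\<lambda>q. (\<Sum>s<t. A s q) / real t - X t q / real t) w) \<longlonglongrightarrow> ip (\<lambda>q. \<rho> q - \<eta> q) w"
    using assms(3,4) by (intro tendsto_ip tendsto_diff) auto
  ultimately show ?thesis
    by (simp add: ip_diff_left)
qed

theorem lemma9: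
  fixes Sch :: "('q::finite \<Rightarrow> real) set"
    and d :: "'q \<Rightarrow> real"
    and A :: "nat \<Rightarrow> 'q \<Rightarrow> real"
    and Abar \<rho> \<eta> :: "'q \<Rightarrow> real"
    and X Sel :: "nat \<Rightarrow> 'q \<Rightarrow> real"
  assumes Sch_fin: "finite Sch" and Sch_ne: "Sch \<noteq> {}"
    and Sch_nonneg: "\<forall>S\<in>Sch. \<forall>q. 0 \<le> S q"
    and d_pos: "\<forall>q. 0 < d q"
    and A_bnd: "\<forall>t q. 0 \<le> A t q \<and> A t q \<le> Abar q"
    and rho_lim: "\<forall>q. (\<lambda>t. (\<Sum>s<t. A s q) / real t) \<longlonglongrightarrow> \<rho> q"
    and rho_pos: "\<forall>q. 0 < \<rho> q"
    and X0: "X 0 = (\<lambda>q. 0)"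
    and X_step: "\<forall>t q. X (Suc t) q = X t q + A t q - min (Sel t q) (X t q)"
    and Sel_in: "\<forall>t. Sel t \<in> Sch"
    and Sel_max: "\<forall>t. \<forall>S\<in>Sch. ip S (diag_apply d (X t)) \<le> ip (Sel t) (diag_apply d (X t))"
    and overload: "\<rho> \<notin> stab_region Sch"
    and eta_lim: "\<forall>q. (\<lambda>t. X t q / real t) \<longlonglongrightarrow> \<eta> q"
  shows "ip \<eta> (diag_apply d \<eta>) =
         ip \<rho> (diag_apply d \<eta>) - Max ((\<lambda>S. ip S (diag_apply d \<eta>)) ` Sch)"
proof -
  define e where "e = diag_apply d \<eta>"
  define D where "D t q = min (Sel t q) (X t q)" for t q
  have X_nonneg: "0 \<le> X t q" for t q
    by (rule backlog_nonneg[of "\<lambda>t. X t q" "\<lambda>t. A t q" "\<lambda>t. Sel t q"]) (use X0 A_bnd X_step in auto)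
  have "\<forall>\<^sub>F t in sequentially. ip (D t) e = ip (Sel t) e"
    unfolding D_def e_def
    by (rule eventually_departures_eq_schedule[OF Sch_fin]) (use Sel_in X_nonneg eta_lim in auto)
  moreover have "(\<lambda>t. ip (Sel t) e) \<longlonglongrightarrow> Max ((\<lambda>S. ip S e) ` Sch)"
    unfolding e_def
    by (rule maxweight_asymptotically_optimal[OF Sch_fin, where X = X]) (use Sel_in Sel_max eta_lim in auto)
  ultimately have "(\<lambda>t. ip (D t) e) \<longlonglongrightarrow> Max ((\<lambda>S. ip S e) ` Sch)"
    by (simp add: tendsto_cong)
  then have "(\<lambda>t. (\<Sum>s<t. ip (D s) e) / real t) \<longlonglongrightarrow> Max ((\<lambda>S. ip S e) ` Sch)"
    using cesaro_mean_tendsto[of "\<lambda>t. ip (D t) e"] by (simp add: divide_inverse_commute)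
  moreover have "(\<lambda>t. (\<Sum>s<t. ip (D s) e) / real t) \<longlonglongrightarrow> ip \<rho> e - ip \<eta> e"
    unfolding D_def
    by (rule average_departures_tendsto[where A = A]) (use X0 X_step rho_lim eta_lim in auto)
  ultimately have "Max ((\<lambda>S. ip S e) ` Sch) = ip \<rho> e - ip \<eta> e"
    by (rule LIMSEQ_unique)
  then show ?thesis
    unfolding e_def by linarith
qed

end
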